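(* Let $n>k\ge 1$ be integers, not both even, such that $n\neq Mk$ for every positive integer $M$ (i.e. $k$ does not divide $n$). Let $\alpha=\lceil n/2\rceil-\lfloor (n-k)/2\rfloor$, $\beta=k-\alpha$, and $G=\sqrt{n/k}\,W_n^H\Sigma W_k$. Let $G_k$ be any $k\times k$ submatrix of $G$ formed by $k$ distinct rows of $G$. Then the smallest eigenvalue of $G_kG_k^H$ is strictly less than $1$ and the largest eigenvalue of $G_kG_k^H$ is strictly greater than $1$.
   Context: For a positive integer $l$, $W_l$ denotes the unitary $l\times l$ DFT matrix, $(W_l)_{r,s}=\frac{1}{\sqrt l}e^{-j2\pi(r-1)(s-1)/l}$, and $^H$ denotes conjugate transpose. $\Sigma$ is the $n\times k$ matrix $\begin{pmatrix} I_\alpha & 0\\ 0 & 0\\ 0 & I_\beta\end{pmatrix}$: its first $\alpha$ rows are $(I_\alpha\ 0)$, its last $\beta$ rows are $(0\ I_\beta)$, and its middle $n-k$ rows are zero. *)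

theory Defs
  imports "Jordan_Normal_Form.Schur_Decomposition" "Jordan_Normal_Form.DL_Submatrix"
begin

definition DFT :: "nat \<Rightarrow> complex mat" where
  "DFT l = mat l l (\<lambda>(r, s). complex_of_real (1 / sqrt (real l)) *
                      cis (- 2 * pi * real r * real s / real l))"

definition alpha_nk :: "nat \<Rightarrow> nat \<Rightarrow> int" where
  "alpha_nk n k = \<lceil>real n / 2\<rceil> - \<lfloor>(real n - real k) / 2\<rfloor>"

definition beta_nk :: "nat \<Rightarrow> nat \<Rightarrow> int" where
  "beta_nk n k = int k - alpha_nk n k"

text \<open>The n x k matrix Sigma: first alpha rows (I_alpha 0), last beta rows (0 I_beta),
  middle rows zero (0-indexed).\<close>
definition Sigma_mat :: "nat \<Rightarrow> nat \<Rightarrow> complex mat" where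
  "Sigma_mat n k = mat n k (\<lambda>(i, j).
     if int i < alpha_nk n k \<and> j = i then 1
     else if int n - beta_nk n k \<le> int i \<and> int j = int i - (int n - beta_nk n k) + alpha_nk n k then 1
     else 0)"

definition G_mat :: "nat \<Rightarrow> nat \<Rightarrow> complex mat" where
  "G_mat n k = complex_of_real (sqrt (real n / real k)) \<cdot>\<^sub>m
     (mat_adjoint (DFT n) * Sigma_mat n k * DFT k)"

end

theory Submission
  imports Defs
begin

text \<open>
  Since \<open>W_k\<close> is unitary, \<open>G G^H = (n/k) W_n^H \<Sigma> \<Sigma>^H W_n\<close>; its entry \<open>(r,s)\<close> is
  \<open>(1/k) \<Sum>_{i \<in> S} \<omega>^(i(r-s))\<close>, where \<open>\<omega> = e^(j 2\<pi>/n)\<close> and \<open>S\<close> is the set of the \<open>k\<close> nonzero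
  rows of \<open>\<Sigma>\<close>. As \<open>S\<close> is a cyclically consecutive block of residues modulo \<open>n\<close>, this is a
  rotated geometric sum, which vanishes only if \<open>n\<close> divides \<open>k(r-s)\<close>. Because \<open>k\<close> does not
  divide \<open>n\<close>, pigeonholing modulo \<open>n / gcd n k\<close> yields two of the \<open>k\<close> chosen rows for which it
  does not. So \<open>G_k G_k^H\<close> is Hermitian with unit diagonal and a nonzero off-diagonal entry:
  its real eigenvalues satisfy \<open>\<Sum> \<lambda>_i = k\<close> and \<open>\<Sum> \<lambda>_i^2 = \<parallel>G_k G_k^H\<parallel>_F^2 > k\<close>, hence they
  cannot all lie on one side of 1.
\<close>

definition mat_trace :: "'a :: comm_ring_1 mat \<Rightarrow> 'a" where
  "mat_trace M = (\<Sum>i<dim_row M. M $$ (i,i))"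

lemma mat_trace_mult_comm:
  fixes X Y :: "'a :: comm_ring_1 mat"
  assumes X: "X \<in> carrier_mat n m" and Y: "Y \<in> carrier_mat m n"
  shows "mat_trace (X * Y) = mat_trace (Y * X)"
proof -
  have "mat_trace (X * Y) = (\<Sum>i<n. \<Sum>j<m. X $$ (i,j) * Y $$ (j,i))"
    using X Y unfolding mat_trace_def
    by (auto simp: scalar_prod_def intro!: sum.cong atLeast0LessThan)
  also have "\<dots> = (\<Sum>j<m. \<Sum>i<n. Y $$ (j,i) * X $$ (i,j))"
    by (subst sum.swap) (simp add: mult.commute)
  also have "\<dots> = mat_trace (Y * X)"
    using X Y unfolding mat_trace_def
    by (auto simp: scalar_prod_def intro!: sum.cong atLeast0LessThan)
  finally show ?thesis .
qed

lemma mat_trace_similar_mat_wit: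
  fixes A B :: "'a :: comm_ring_1 mat"
  assumes A: "A \<in> carrier_mat n n" and sim: "similar_mat_wit A B P Q"
  shows "mat_trace A = mat_trace B"
proof -
  note wit = similar_mat_witD2[OF A sim]
  have "mat_trace A = mat_trace (P * B * Q)" using wit(3) by simp
  also have "\<dots> = mat_trace (Q * (P * B))"
    using wit by (intro mat_trace_mult_comm[of _ n n]) auto
  also have "Q * (P * B) = (Q * P) * B"
    using wit by (intro assoc_mult_mat[symmetric]) auto
  also have "\<dots> = B"
    unfolding wit(2) using wit(5) by (rule left_mult_one_mat)
  finally show ?thesis .
qed

lemma upper_triangular_mult_diag:
  fixes B C :: "'a :: comm_ring_1 mat"
  assumes B: "B \<in> carrier_mat k k" and C: "C \<in> carrier_mat k k"
    and "upper_triangular B" "upper_triangular C" and i: "i < k"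
  shows "(B * C) $$ (i,i) = B $$ (i,i) * C $$ (i,i)"
proof -
  have B0: "B $$ (i,j) = 0" if "j < i" for j
    using assms(3) B i that unfolding upper_triangular_def by auto
  have C0: "C $$ (j,i) = 0" if "i < j" "j < k" for j
    using assms(4) C that unfolding upper_triangular_def by auto
  have "(B * C) $$ (i,i) = (\<Sum>j<k. B $$ (i,j) * C $$ (j,i))"
    using B C i by (simp add: scalar_prod_def atLeast0LessThan)
  also have "\<dots> = (\<Sum>j<k. if j = i then B $$ (i,i) * C $$ (i,i) else 0)"
  proof (intro sum.cong refl)
    fix j assume "j \<in> {..<k}"
    then show "B $$ (i,j) * C $$ (j,i) = (if j = i then B $$ (i,i) * C $$ (i,i) else 0)"
      by (cases j i rule: linorder_cases) (auto simp: B0 C0)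
  qed
  finally show ?thesis using i by simp
qed

lemma mat_adjoint_dim [simp]:
  "dim_row (mat_adjoint A) = dim_col A" "dim_col (mat_adjoint A) = dim_row A"
  unfolding mat_adjoint_def by (simp_all add: mat_of_rows_def)

lemma mat_adjoint_carrier [simp]: "A \<in> carrier_mat n m \<Longrightarrow> mat_adjoint A \<in> carrier_mat m n"
  by (metis mat_adjoint_dim carrier_matD carrier_matI)

lemma mat_adjoint_index:
  assumes "i < dim_col A" and "j < dim_row A"
  shows "mat_adjoint (A :: complex mat) $$ (i,j) = cnj (A $$ (j,i))"
  using assms unfolding mat_adjoint_def by (simp add: mat_of_rows_index)

lemma mat_adjoint_mult:
  assumes A: "(A :: complex mat) \<in> carrier_mat n m" and B: "B \<in> carrier_mat m p"
  shows "mat_adjoint (A * B) = mat_adjoint B * mat_adjoint A"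
proof (rule eq_matI)
  fix i j assume "i < dim_row (mat_adjoint B * mat_adjoint A)"
    and "j < dim_col (mat_adjoint B * mat_adjoint A)"
  then have i: "i < p" and j: "j < n" using A B by auto
  have "mat_adjoint (A * B) $$ (i,j) = cnj (\<Sum>l<m. A $$ (j,l) * B $$ (l,i))"
    using i j A B by (simp add: mat_adjoint_index scalar_prod_def atLeast0LessThan)
  also have "\<dots> = (mat_adjoint B * mat_adjoint A) $$ (i,j)"
    using i j A B by (simp add: mat_adjoint_index scalar_prod_def atLeast0LessThan mult.commute)
  finally show "mat_adjoint (A * B) $$ (i,j) = (mat_adjoint B * mat_adjoint A) $$ (i,j)" .
qed (use A B in auto)

lemma mult_mat_adjoint_index:
  assumes X: "(X :: complex mat) \<in> carrier_mat n m" and i: "i < n" and j: "j < n"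
  shows "(X * mat_adjoint X) $$ (i,j) = (\<Sum>l<m. X $$ (i,l) * cnj (X $$ (j,l)))"
  using X i j by (simp add: scalar_prod_def atLeast0LessThan mat_adjoint_index)

lemma gram_mult_unitary:
  fixes H W :: "complex mat"
  assumes H: "H \<in> carrier_mat n k" and W: "W \<in> carrier_mat k k"
    and unitary: "W * mat_adjoint W = 1\<^sub>m k"
  shows "(H * W) * mat_adjoint (H * W) = H * mat_adjoint H"
proof -
  have HA: "mat_adjoint H \<in> carrier_mat k n" and WA: "mat_adjoint W \<in> carrier_mat k k"
    using H W by simp_all
  have "(H * W) * mat_adjoint (H * W) = (H * W) * (mat_adjoint W * mat_adjoint H)"
    using mat_adjoint_mult[OF H W] by simp
  also have "\<dots> = H * (W * (mat_adjoint W * mat_adjoint H))"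
    by (rule assoc_mult_mat[OF H W mult_carrier_mat[OF WA HA]])
  also have "W * (mat_adjoint W * mat_adjoint H) = (W * mat_adjoint W) * mat_adjoint H"
    by (rule assoc_mult_mat[OF W WA HA, symmetric])
  also have "W * mat_adjoint W = 1\<^sub>m k" by (rule unitary)
  also have "1\<^sub>m k * mat_adjoint H = mat_adjoint H" by (rule left_mult_one_mat[OF HA])
  finally show ?thesis .
qed

lemma submatrix_rows_gram:
  fixes X :: "complex mat"
  assumes X: "X \<in> carrier_mat n m" and R: "R \<subseteq> {0..<n}"
  defines "Y \<equiv> submatrix X R {0..<m}"
  shows "Y * mat_adjoint Y \<in> carrier_mat (card R) (card R)"
    and "\<And>a b. a < card R \<Longrightarrow> b < card R \<Longrightarrow>
           (Y * mat_adjoint Y) $$ (a,b) = (X * mat_adjoint X) $$ (pick R a, pick R b)"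
proof -
  have rows: "{i. i < dim_row X \<and> i \<in> R} = R" and cols: "{j. j < dim_col X \<and> j < m} = {0..<m}"
    using X R by auto
  have Y: "Y \<in> carrier_mat (card R) m"
    unfolding Y_def by (rule carrier_matI) (simp_all add: dim_submatrix rows cols)
  then show "Y * mat_adjoint Y \<in> carrier_mat (card R) (card R)" by simp
  have pick_cols: "pick {0..<m} j = j" if "j < m" for j
  proof -
    have "{a \<in> {0..<m}. a < j} = {0..<j}" using that by auto
    then show ?thesis using pick_card_in_set[of j "{0..<m}"] that by simp
  qed
  have pick_R: "pick R a < n" if "a < card R" for a
    using pick_in_set[of a R] that R by auto
  fix a b assume a: "a < card R" and b: "b < card R"
  have Y_index: "Y $$ (c,j) = X $$ (pick R c, j)" if "c < card R" "j < m" for c j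
    unfolding Y_def using that by (subst submatrix_index) (simp_all add: rows cols pick_cols)
  show "(Y * mat_adjoint Y) $$ (a,b) = (X * mat_adjoint X) $$ (pick R a, pick R b)"
    using mult_mat_adjoint_index[OF Y a b] mult_mat_adjoint_index[OF X pick_R[OF a] pick_R[OF b]]
    by (simp add: Y_index a b)
qed

lemma ex_pick_index:
  assumes "finite R" and "r \<in> R"
  obtains a where "a < card R" and "pick R a = r"
proof
  show "card {x \<in> R. x < r} < card R"
    using assms by (intro psubset_card_mono) auto
  show "pick R (card {x \<in> R. x < r}) = r" by (rule pick_card_in_set[OF assms(2)])
qed

definition hermitian_mat :: "complex mat \<Rightarrow> bool" where
  "hermitian_mat A \<longleftrightarrow> (\<forall>i<dim_row A. \<forall>j<dim_row A. A $$ (j,i) = cnj (A $$ (i,j)))"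

lemma hermitian_matD:
  assumes "hermitian_mat A" and "A \<in> carrier_mat k k" and "i < k" "j < k"
  shows "A $$ (j,i) = cnj (A $$ (i,j))"
  using assms unfolding hermitian_mat_def carrier_mat_def by blast

lemma hermitian_quadratic_form_real:
  fixes A :: "complex mat" and v :: "complex vec"
  assumes A: "A \<in> carrier_mat k k" and herm: "hermitian_mat A"
  shows "cnj (\<Sum>i<k. cnj (v$i) * (\<Sum>j<k. A $$ (i,j) * v$j))
       = (\<Sum>i<k. cnj (v$i) * (\<Sum>j<k. A $$ (i,j) * v$j))"
proof -
  have "cnj (\<Sum>i<k. cnj (v$i) * (\<Sum>j<k. A $$ (i,j) * v$j))
      = (\<Sum>i<k. \<Sum>j<k. v$i * (cnj (A $$ (i,j)) * cnj (v$j)))"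
    by (simp add: sum_distrib_left)
  also have "\<dots> = (\<Sum>i<k. \<Sum>j<k. v$i * (A $$ (j,i) * cnj (v$j)))"
  proof (intro sum.cong refl)
    fix i j assume "i \<in> {..<k}" "j \<in> {..<k}"
    then have "A $$ (j,i) = cnj (A $$ (i,j))" by (intro hermitian_matD[OF herm A]) auto
    then show "v$i * (cnj (A $$ (i,j)) * cnj (v$j)) = v$i * (A $$ (j,i) * cnj (v$j))" by simp
  qed
  also have "\<dots> = (\<Sum>j<k. \<Sum>i<k. cnj (v$j) * (A $$ (j,i) * v$i))"
    by (subst sum.swap) (simp add: mult.commute mult.left_commute)
  finally show ?thesis by (simp add: sum_distrib_left)
qed

lemma hermitian_eigenvalue_real:
  fixes A :: "complex mat"
  assumes A: "A \<in> carrier_mat k k"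
    and herm: "hermitian_mat A"
    and "eigenvalue A e"
  shows "e = of_real (Re e)"
proof -
  obtain v where "eigenvector A v e" using assms(3) unfolding eigenvalue_def by blast
  then have v: "v \<in> carrier_vec k" "v \<noteq> 0\<^sub>v k" "A *\<^sub>v v = e \<cdot>\<^sub>v v"
    using A unfolding eigenvector_def by auto
  define N where "N = (\<Sum>i<k. (cmod (v$i))\<^sup>2)"
  have Av: "(\<Sum>j<k. A $$ (i,j) * v$j) = e * v$i" if "i < k" for i
  proof -
    have "(\<Sum>j<k. A $$ (i,j) * v$j) = (A *\<^sub>v v) $ i"
      using A v(1) that by (simp add: scalar_prod_def atLeast0LessThan)
    then show ?thesis using v that by simp
  qed
  have "(\<Sum>i<k. cnj (v$i) * (\<Sum>j<k. A $$ (i,j) * v$j)) = (\<Sum>i<k. cnj (v$i) * (e * v$i))"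
    by (intro sum.cong refl) (simp add: Av)
  also have "\<dots> = e * of_real N"
    unfolding N_def of_real_sum complex_norm_square by (simp add: sum_distrib_left mult_ac)
  finally have "(\<Sum>i<k. cnj (v$i) * (\<Sum>j<k. A $$ (i,j) * v$j)) = e * of_real N" .
  with hermitian_quadratic_form_real[OF A herm, of v]
  have "cnj e * of_real N = e * of_real N" by (metis complex_cnj_complex_of_real complex_cnj_mult)
  moreover obtain i where "i < k" "v$i \<noteq> 0"
    using v(1,2) by (metis carrier_vecD eq_vecI index_zero_vec(1,2))
  then have "N > 0" unfolding N_def by (intro sum_pos2[of _ i]) auto
  ultimately have "cnj e = e" by simp
  then show ?thesis by (metis Reals_cnj_iff of_real_Re)
qed

lemma hermitian_trace_square:
  fixes A :: "complex mat"
  assumes A: "A \<in> carrier_mat k k"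
    and herm: "hermitian_mat A"
  shows "mat_trace (A * A) = of_real (\<Sum>i<k. \<Sum>j<k. (cmod (A $$ (i,j)))\<^sup>2)"
proof -
  have "mat_trace (A * A) = (\<Sum>i<k. \<Sum>j<k. A $$ (i,j) * A $$ (j,i))"
    using A unfolding mat_trace_def by (simp add: scalar_prod_def atLeast0LessThan)
  also have "\<dots> = (\<Sum>i<k. \<Sum>j<k. of_real ((cmod (A $$ (i,j)))\<^sup>2))"
  proof (intro sum.cong refl)
    fix i j assume "i \<in> {..<k}" "j \<in> {..<k}"
    then have "A $$ (j,i) = cnj (A $$ (i,j))" by (intro hermitian_matD[OF herm A]) auto
    then show "A $$ (i,j) * A $$ (j,i) = of_real ((cmod (A $$ (i,j)))\<^sup>2)"
      using complex_norm_square[of "A $$ (i,j)"] by simp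
  qed
  finally show ?thesis by simp
qed

text \<open>The eigenvalues are the diagonal of a Schur form \<open>B\<close> of \<open>A\<close>, and \<open>B\<close>, \<open>B\<^sup>2\<close> have the
  traces of \<open>A\<close>, \<open>A\<^sup>2\<close>.\<close>

lemma hermitian_spectrum_power_sums:
  fixes A :: "complex mat"
  assumes A: "A \<in> carrier_mat k k"
    and herm: "hermitian_mat A"
  obtains d :: "nat \<Rightarrow> real"
  where "{t. eigenvalue A (of_real t)} = d ` {..<k}"
    and "of_real (\<Sum>i<k. d i) = mat_trace A"
    and "(\<Sum>i<k. d i ^ 2) = (\<Sum>i<k. \<Sum>j<k. (cmod (A $$ (i,j)))\<^sup>2)"
proof -
  obtain es where es: "char_poly A = (\<Prod>a\<leftarrow>es. [:- a, 1:])"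
    using char_poly_factorized[OF A] by blast
  obtain B P Q where "schur_decomposition A es = (B,P,Q)"
    by (cases "schur_decomposition A es") auto
  from schur_decomposition[OF A es this]
  have sim: "similar_mat_wit A B P Q" and ut: "upper_triangular B" and diag: "diag_mat B = es"
    by auto
  have B: "B \<in> carrier_mat k k" using similar_mat_witD2[OF A sim] by blast
  define d where "d i = Re (B $$ (i,i))" for i
  have eigenvalue_iff: "eigenvalue A e \<longleftrightarrow> (\<exists>i<k. e = B $$ (i,i))" for e
    using B unfolding eigenvalue_root_char_poly[OF A] es diag[symmetric]
    by (auto simp: poly_prod_list_zero_iff diag_mat_def)
  have B_diag: "B $$ (i,i) = of_real (d i)" if "i < k" for i
    unfolding d_def using hermitian_eigenvalue_real[OF A herm] eigenvalue_iff that by blast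
  have spectrum: "{t. eigenvalue A (of_real t)} = d ` {..<k}"
    by (auto simp: eigenvalue_iff B_diag)
  have trace: "of_real (\<Sum>i<k. d i) = mat_trace A"
    using mat_trace_similar_mat_wit[OF A sim] B by (simp add: mat_trace_def B_diag)
  have "similar_mat_wit (A * A) (B * B) P Q"
    using similar_mat_wit_pow[OF sim, of 2] A B by (simp add: numeral_2_eq_2)
  then have "mat_trace (A * A) = mat_trace (B * B)"
    by (rule mat_trace_similar_mat_wit[OF mult_carrier_mat[OF A A]])
  also have "\<dots> = (\<Sum>i<k. (B * B) $$ (i,i))"
    unfolding mat_trace_def using B by (simp only: index_mult_mat(2) carrier_matD(1))
  also have "\<dots> = of_real (\<Sum>i<k. d i ^ 2)"
    unfolding of_real_sum
    by (intro sum.cong refl) (simp add: upper_triangular_mult_diag[OF B B ut ut] B_diag power2_eq_square)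
  finally have "(\<Sum>i<k. d i ^ 2) = (\<Sum>i<k. \<Sum>j<k. (cmod (A $$ (i,j)))\<^sup>2)"
    using hermitian_trace_square[OF A herm] by (metis of_real_eq_iff)
  with spectrum trace show ?thesis by (rule that)
qed

lemma sum_square_gt_card_straddles_one:
  fixes d :: "nat \<Rightarrow> real"
  assumes sum: "(\<Sum>i<k. d i) = real k" and squares: "(\<Sum>i<k. d i ^ 2) > real k"
  shows "\<exists>i<k. d i < 1" and "\<exists>j<k. d j > 1"
proof -
  have not_all_one: "\<exists>i<k. d i \<noteq> 1"
  proof (rule ccontr)
    assume "\<not> ?thesis"
    then have "(\<Sum>i<k. d i ^ 2) = real k" by simp
    with squares show False by simp
  qed
  have above: "(\<Sum>i<k. d i - 1) = 0" and below: "(\<Sum>i<k. 1 - d i) = 0"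
    using sum by (simp_all add: sum_subtractf)
  show "\<exists>i<k. d i < 1"
  proof (rule ccontr)
    assume "\<not> ?thesis"
    then have "\<forall>i\<in>{..<k}. d i - 1 = 0"
      using above by (subst sum_nonneg_eq_0_iff[symmetric]) auto
    with not_all_one show False by auto
  qed
  show "\<exists>j<k. d j > 1"
  proof (rule ccontr)
    assume "\<not> ?thesis"
    then have "\<forall>i\<in>{..<k}. 1 - d i = 0"
      using below by (subst sum_nonneg_eq_0_iff[symmetric]) auto
    with not_all_one show False by auto
  qed
qed

lemma hermitian_unit_diagonal_eigenvalues_straddle_one:
  fixes A :: "complex mat"
  assumes A: "A \<in> carrier_mat k k"
    and herm: "hermitian_mat A"
    and diag: "\<And>i. i < k \<Longrightarrow> A $$ (i,i) = 1"
    and off: "a < k" "b < k" "a \<noteq> b" "A $$ (a,b) \<noteq> 0"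
  shows "Min {t::real. eigenvalue A (of_real t)} < 1 \<and> Max {t::real. eigenvalue A (of_real t)} > 1"
proof -
  obtain d where spec: "{t. eigenvalue A (of_real t)} = d ` {..<k}"
    and trace: "of_real (\<Sum>i<k. d i) = mat_trace A"
    and squares: "(\<Sum>i<k. d i ^ 2) = (\<Sum>i<k. \<Sum>j<k. (cmod (A $$ (i,j)))\<^sup>2)"
    using hermitian_spectrum_power_sums[OF A herm] by blast
  have "mat_trace A = of_nat k" using A diag by (simp add: mat_trace_def)
  with trace have sum: "(\<Sum>i<k. d i) = real k" by (metis of_real_eq_iff of_real_of_nat_eq)
  have row_ge: "1 \<le> (\<Sum>j<k. (cmod (A $$ (i,j)))\<^sup>2)" if "i < k" for i
    using sum_mono2[of "{..<k}" "{i}" "\<lambda>j. (cmod (A $$ (i,j)))\<^sup>2"] that diag by simp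
  have "1 + (cmod (A $$ (a,b)))\<^sup>2 \<le> (\<Sum>j<k. (cmod (A $$ (a,j)))\<^sup>2)"
    using sum_mono2[of "{..<k}" "{a,b}" "\<lambda>j. (cmod (A $$ (a,j)))\<^sup>2"] off diag by simp
  moreover have "(cmod (A $$ (a,b)))\<^sup>2 > 0" using off(4) by simp
  ultimately have row_gt: "1 < (\<Sum>j<k. (cmod (A $$ (a,j)))\<^sup>2)" by linarith
  have "(\<Sum>i<k. 1::real) < (\<Sum>i<k. \<Sum>j<k. (cmod (A $$ (i,j)))\<^sup>2)"
    by (rule sum_strict_mono_ex1) (use row_ge row_gt off in auto)
  then have "(\<Sum>i<k. d i ^ 2) > real k" using squares by simp
  from sum_square_gt_card_straddles_one[OF sum this]
  obtain i j where "i < k" "d i < 1" "j < k" "d j > 1" by blast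
  moreover have "Min (d ` {..<k}) \<le> d i" "Max (d ` {..<k}) \<ge> d j"
    using \<open>i < k\<close> \<open>j < k\<close> by simp_all
  ultimately show ?thesis unfolding spec by linarith
qed

lemma cis_2pi_frac_eq_1_iff:
  assumes "n > 0"
  shows "cis (2 * pi * real_of_int x / real n) = 1 \<longleftrightarrow> int n dvd x"
proof
  assume "cis (2 * pi * real_of_int x / real n) = 1"
  then have "cos (2 * pi * real_of_int x / real n) = 1" by (metis cis.sel(1) one_complex.sel(1))
  then obtain m where "2 * pi * real_of_int x / real n = real_of_int m * 2 * pi"
    using cos_one_2pi_int by blast
  then have "real_of_int x = real_of_int (m * int n)" using assms by (simp add: field_simps)
  then show "int n dvd x" by (metis dvd_triv_right of_int_eq_iff)
next
  assume "int n dvd x"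
  then obtain m where "x = int n * m" by blast
  then have "2 * pi * real_of_int x / real n = 2 * pi * real_of_int m" using assms by simp
  then show "cis (2 * pi * real_of_int x / real n) = 1"
    by (simp add: cis.ctr complex_eq_iff)
qed

lemma sum_roots_of_unity:
  assumes n: "n > 0"
  shows "(\<Sum>j<n. cis (2 * pi * real j * real_of_int x / real n)) = (if int n dvd x then of_nat n else 0)"
proof -
  define z where "z = cis (2 * pi * real_of_int x / real n)"
  have powers: "z ^ m = cis (2 * pi * real_of_int (int m * x) / real n)" for m
    unfolding z_def DeMoivre by (simp add: field_simps)
  have "z ^ n = 1" unfolding powers using cis_2pi_frac_eq_1_iff[OF n, of "int n * x"] by simp
  then have geometric: "(z - 1) * (\<Sum>j<n. z ^ j) = 0" using power_diff_1_eq[of z n] by simp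
  have "(\<Sum>j<n. cis (2 * pi * real j * real_of_int x / real n)) = (\<Sum>j<n. z ^ j)"
    unfolding powers by (simp add: field_simps)
  also have "\<dots> = (if int n dvd x then of_nat n else 0)"
  proof (cases "int n dvd x")
    case True
    then have "z = 1" unfolding z_def using cis_2pi_frac_eq_1_iff[OF n] by simp
    with True show ?thesis by simp
  next
    case False
    then have "z \<noteq> 1" unfolding z_def using cis_2pi_frac_eq_1_iff[OF n] by simp
    with False geometric show ?thesis by simp
  qed
  finally show ?thesis .
qed

lemma DFT_index:
  "r < l \<Longrightarrow> s < l \<Longrightarrow>
   DFT l $$ (r,s) = of_real (1 / sqrt (real l)) * cis (- 2 * pi * real r * real s / real l)"
  unfolding DFT_def by simp

lemma DFT_carrier [simp]: "DFT l \<in> carrier_mat l l"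
  unfolding DFT_def by simp

lemma DFT_dim [simp]: "dim_row (DFT l) = l" "dim_col (DFT l) = l"
  unfolding DFT_def by simp_all

lemma DFT_cnj_mult:
  assumes "t < l" "r < l" "s < l"
  shows "cnj (DFT l $$ (t,r)) * DFT l $$ (t,s)
       = of_real (1 / real l) * cis (2 * pi * real t * (real r - real s) / real l)"
proof -
  have cnj_mult_cis: "cnj (of_real c * cis a) * (of_real c * cis b) = of_real (c\<^sup>2) * cis (b - a)"
    for c a b by (simp add: cis_cnj cis_mult power2_eq_square mult_ac)
  have "(1 / sqrt (real l))\<^sup>2 = 1 / real l" using assms by (simp add: power_divide)
  moreover have "- 2 * pi * real t * real s / real l - (- 2 * pi * real t * real r / real l)
      = 2 * pi * real t * (real r - real s) / real l"
    by (simp add: diff_divide_distrib algebra_simps)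
  ultimately show ?thesis
    using assms by (simp only: DFT_index cnj_mult_cis)
qed

lemma DFT_unitary:
  assumes "l > 0"
  shows "DFT l * mat_adjoint (DFT l) = 1\<^sub>m l"
proof (rule mat_mult_left_right_inverse[OF _ DFT_carrier])
  show "mat_adjoint (DFT l) * DFT l = 1\<^sub>m l"
  proof (rule eq_matI)
    fix a b assume "a < dim_row (1\<^sub>m l)" "b < dim_col (1\<^sub>m l)"
    then have a: "a < l" and b: "b < l" by auto
    have "(mat_adjoint (DFT l) * DFT l) $$ (a,b) = (\<Sum>t<l. cnj (DFT l $$ (t,a)) * DFT l $$ (t,b))"
      using a b by (simp add: mat_adjoint_index scalar_prod_def atLeast0LessThan)
    also have "\<dots> = of_real (1 / real l) *
        (\<Sum>t<l. cis (2 * pi * real t * real_of_int (int a - int b) / real l))"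
      using a b by (simp add: DFT_cnj_mult sum_distrib_left)
    also have "\<dots> = of_real (1 / real l) * (if int l dvd int a - int b then of_nat l else 0)"
      by (simp only: sum_roots_of_unity[OF assms])
    also have "int l dvd int a - int b \<longleftrightarrow> a = b"
    proof
      assume "int l dvd int a - int b"
      moreover have "\<bar>int a - int b\<bar> < int l" using a b by auto
      ultimately show "a = b" using dvd_imp_le_int[of "int a - int b" "int l"] by fastforce
    qed simp
    also have "of_real (1 / real l) * (if a = b then of_nat l else 0) = (1\<^sub>m l $$ (a,b) :: complex)"
      using a b assms by (cases "a = b") simp_all
    finally show "(mat_adjoint (DFT l) * DFT l) $$ (a,b) = 1\<^sub>m l $$ (a,b)" .
  qed auto
qed simp

lemma alpha_nk_bounds:
  assumes "0 < k" "k < n"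
  shows "0 \<le> alpha_nk n k" "alpha_nk n k \<le> int k"
proof -
  have ceiling: "\<lceil>real n / 2\<rceil> = - (- int n div 2)"
    using ceiling_divide_eq_div[of "int n" 2] by simp
  have "\<lfloor>(real n - real k) / 2\<rfloor> = \<lfloor>real (n - k) / real (2::nat)\<rfloor>"
    using assms by simp
  also have "\<dots> = int ((n - k) div 2)"
    by (rule floor_divide_of_nat_eq)
  also have "\<dots> = (int n - int k) div 2"
    using assms by (simp add: zdiv_int)
  finally have "alpha_nk n k = - (- int n div 2) - (int n - int k) div 2"
    using ceiling unfolding alpha_nk_def by simp
  then show "0 \<le> alpha_nk n k" "alpha_nk n k \<le> int k" using assms by presburger+
qed

definition Sigma_row :: "nat \<Rightarrow> nat \<Rightarrow> nat \<Rightarrow> nat" where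
  "Sigma_row n k l = (if int l < alpha_nk n k then l else l + n - k)"

lemma Sigma_row_less: "k < n \<Longrightarrow> l < k \<Longrightarrow> Sigma_row n k l < n"
  unfolding Sigma_row_def by auto

lemma Sigma_mat_index:
  assumes kn: "k < n" and i: "i < n" and l: "l < k"
  shows "Sigma_mat n k $$ (i,l) = (if i = Sigma_row n k l then 1 else 0)"
proof -
  define a where "a = nat (alpha_nk n k)"
  have alpha: "alpha_nk n k = int a" unfolding a_def using alpha_nk_bounds[of k n] kn l by simp
  have "Sigma_mat n k $$ (i,l) = (if l < a \<and> i = l then 1
      else if int n - int k + int a \<le> int i \<and> int l = int i - int n + int k then 1 else 0)"
    unfolding Sigma_mat_def beta_nk_def alpha using i l by (auto simp: algebra_simps)
  also have "\<dots> = (if i = Sigma_row n k l then 1 else 0)"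
    unfolding Sigma_row_def alpha using kn l by auto
  finally show ?thesis .
qed

lemma Sigma_mat_carrier: "Sigma_mat n k \<in> carrier_mat n k"
  unfolding Sigma_mat_def by simp

lemma adjoint_DFT_Sigma_index:
  assumes "k < n" "r < n" "l < k"
  shows "(mat_adjoint (DFT n) * Sigma_mat n k) $$ (r,l) = cnj (DFT n $$ (Sigma_row n k l, r))"
proof -
  have "(mat_adjoint (DFT n) * Sigma_mat n k) $$ (r,l)
      = (\<Sum>i<n. cnj (DFT n $$ (i,r)) * Sigma_mat n k $$ (i,l))"
    using assms Sigma_mat_carrier[of n k]
    by (simp add: scalar_prod_def atLeast0LessThan mat_adjoint_index)
  also have "\<dots> = (\<Sum>i<n. if i = Sigma_row n k l then cnj (DFT n $$ (Sigma_row n k l, r)) else 0)"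
    using assms by (intro sum.cong refl) (simp add: Sigma_mat_index)
  finally show ?thesis using Sigma_row_less assms by simp
qed

definition support_char_sum :: "nat \<Rightarrow> nat \<Rightarrow> nat \<Rightarrow> nat \<Rightarrow> complex" where
  "support_char_sum n k r s = (\<Sum>l<k. cis (2 * pi * real (Sigma_row n k l) * (real r - real s) / real n))"

lemma G_mat_carrier: "G_mat n k \<in> carrier_mat n k"
  unfolding G_mat_def
  by (intro smult_carrier_mat mult_carrier_mat[of _ n k] mult_carrier_mat[of _ n n]
      mat_adjoint_carrier DFT_carrier Sigma_mat_carrier)

lemma G_gram_index:
  assumes k: "1 \<le> k" "k < n" and r: "r < n" and s: "s < n"
  shows "(G_mat n k * mat_adjoint (G_mat n k)) $$ (r,s) = of_real (1 / real k) * support_char_sum n k r s"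
proof -
  define H where "H = mat_adjoint (DFT n) * Sigma_mat n k"
  define X where "X = H * DFT k"
  define c where "c = complex_of_real (sqrt (real n / real k))"
  have H: "H \<in> carrier_mat n k"
    unfolding H_def by (rule mult_carrier_mat[OF mat_adjoint_carrier[OF DFT_carrier] Sigma_mat_carrier])
  have X: "X \<in> carrier_mat n k" unfolding X_def using H by simp
  have G: "G_mat n k = c \<cdot>\<^sub>m X" unfolding G_mat_def X_def H_def c_def ..
  have H_index: "H $$ (i,l) = cnj (DFT n $$ (Sigma_row n k l, i))" if "i < n" "l < k" for i l
    unfolding H_def using k that by (intro adjoint_DFT_Sigma_index) auto
  have "(G_mat n k * mat_adjoint (G_mat n k)) $$ (r,s)
      = (\<Sum>j<k. (c * cnj c) * (X $$ (r,j) * cnj (X $$ (s,j))))"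
    unfolding mult_mat_adjoint_index[OF G_mat_carrier r s]
    using X r s by (intro sum.cong refl) (simp add: G mult_ac)
  also have "\<dots> = (c * cnj c) * (X * mat_adjoint X) $$ (r,s)"
    by (simp add: mult_mat_adjoint_index[OF X r s] sum_distrib_left)
  also have "X * mat_adjoint X = H * mat_adjoint H"
    unfolding X_def using gram_mult_unitary[OF H DFT_carrier DFT_unitary] k by simp
  also have "(H * mat_adjoint H) $$ (r,s)
      = (\<Sum>l<k. of_real (1 / real n) * cis (2 * pi * real (Sigma_row n k l) * (real r - real s) / real n))"
    unfolding mult_mat_adjoint_index[OF H r s]
    using k r s by (intro sum.cong refl) (simp add: H_index Sigma_row_less DFT_cnj_mult)
  also have "\<dots> = of_real (1 / real n) * support_char_sum n k r s"
    unfolding support_char_sum_def by (rule sum_distrib_left[symmetric])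
  also have "c * cnj c = of_real (real n / real k)"
    unfolding c_def by (simp flip: of_real_mult)
  also have "of_real (real n / real k) * (of_real (1 / real n) * support_char_sum n k r s)
      = of_real (real n / real k * (1 / real n)) * support_char_sum n k r s"
    by simp
  also have "real n / real k * (1 / real n) = 1 / real k" using k by simp
  finally show ?thesis .
qed

lemma support_char_sum_diag: "support_char_sum n k r r = of_nat k"
  unfolding support_char_sum_def by simp

lemma support_char_sum_swap: "support_char_sum n k s r = cnj (support_char_sum n k r s)"
  unfolding support_char_sum_def cnj_sum cis_cnj
  by (intro sum.cong refl arg_cong[where f = cis]) (metis minus_diff_eq mult_minus_right minus_divide_left)

text \<open>The rows \<open>Sigma_row n k l\<close> form the cyclic block \<open>n-\<beta>, \<dots>, n-1, 0, \<dots>, \<alpha>-1\<close>; multiplying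
  by \<open>z\<^sup>\<beta>\<close> rotates them onto \<open>0, \<dots>, k-1\<close> modulo \<open>n\<close>.\<close>

lemma Sigma_row_power_sum:
  fixes z :: complex
  assumes zn: "z ^ n = 1" and k: "0 < k" and kn: "k < n"
  shows "z ^ (k - nat (alpha_nk n k)) * (\<Sum>l<k. z ^ Sigma_row n k l) = (\<Sum>m<k. z ^ m)"
proof -
  define a where "a = nat (alpha_nk n k)"
  define b where "b = k - a"
  have alpha: "alpha_nk n k = int a" unfolding a_def using alpha_nk_bounds[OF k kn] by simp
  have kab: "k = a + b" unfolding b_def using alpha_nk_bounds[OF k kn] alpha by simp
  have row: "Sigma_row n k l = (if l < a then l else l + n - k)" for l
    unfolding Sigma_row_def alpha by simp
  have "(\<Sum>l\<in>{0..<a}. z ^ b * z ^ Sigma_row n k l) = (\<Sum>l\<in>{0..<a}. z ^ (l + b))"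
    by (intro sum.cong refl) (simp add: row power_add mult.commute)
  also have "\<dots> = (\<Sum>m\<in>{b..<k}. z ^ m)"
    using sum.shift_bounds_nat_ivl[of "\<lambda>m. z ^ m" 0 b a] kab by (simp add: add.commute)
  finally have low: "(\<Sum>l\<in>{0..<a}. z ^ b * z ^ Sigma_row n k l) = (\<Sum>m\<in>{b..<k}. z ^ m)" .
  have "(\<Sum>l\<in>{a..<k}. z ^ b * z ^ Sigma_row n k l) = (\<Sum>l\<in>{0+a..<b+a}. z ^ (l - a))"
  proof (intro sum.cong)
    fix l assume l: "l \<in> {0+a..<b+a}"
    then have "Sigma_row n k l = l + n - k" by (simp add: row)
    then have "b + Sigma_row n k l = (l - a) + n" using kab kn l by simp
    then have "z ^ b * z ^ Sigma_row n k l = z ^ (l - a) * z ^ n" by (metis power_add)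
    then show "z ^ b * z ^ Sigma_row n k l = z ^ (l - a)" using zn by simp
  qed (use kab in \<open>simp add: add.commute\<close>)
  also have "\<dots> = (\<Sum>m\<in>{0..<b}. z ^ m)" by (subst sum.shift_bounds_nat_ivl) simp
  finally have high: "(\<Sum>l\<in>{a..<k}. z ^ b * z ^ Sigma_row n k l) = (\<Sum>m\<in>{0..<b}. z ^ m)" .
  have "z ^ b * (\<Sum>l<k. z ^ Sigma_row n k l)
      = (\<Sum>l\<in>{0..<a}. z ^ b * z ^ Sigma_row n k l) + (\<Sum>l\<in>{a..<k}. z ^ b * z ^ Sigma_row n k l)"
    using kab by (simp add: sum_distrib_left lessThan_atLeast0 sum.atLeastLessThan_concat)
  also have "\<dots> = (\<Sum>m\<in>{0..<b}. z ^ m) + (\<Sum>m\<in>{b..<k}. z ^ m)"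
    unfolding low high by (rule add.commute)
  also have "\<dots> = (\<Sum>m<k. z ^ m)"
    using kab by (simp add: lessThan_atLeast0 sum.atLeastLessThan_concat)
  finally show ?thesis unfolding b_def a_def .
qed

lemma support_char_sum_nonzero:
  assumes kn: "k < n" and not_dvd: "\<not> int n dvd int k * (int r - int s)"
  shows "support_char_sum n k r s \<noteq> 0"
proof
  assume zero: "support_char_sum n k r s = 0"
  define z where "z = cis (2 * pi * real_of_int (int r - int s) / real n)"
  have n: "n > 0" and k: "k > 0" using kn not_dvd by (auto intro: gr0I)
  have powers: "z ^ m = cis (2 * pi * real_of_int (int m * (int r - int s)) / real n)" for m
    unfolding z_def DeMoivre by (simp add: field_simps)
  have "z ^ n = 1" unfolding powers using cis_2pi_frac_eq_1_iff[OF n, of "int n * (int r - int s)"] by simp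
  moreover have "support_char_sum n k r s = (\<Sum>l<k. z ^ Sigma_row n k l)"
    unfolding support_char_sum_def powers by (intro sum.cong refl) (simp add: field_simps)
  ultimately have "(\<Sum>m<k. z ^ m) = 0" using Sigma_row_power_sum[of z n k] k kn zero by simp
  then have "z ^ k = 1" using power_diff_1_eq[of z k] by simp
  then show False
    using not_dvd cis_2pi_frac_eq_1_iff[OF n, of "int k * (int r - int s)"] unfolding powers by simp
qed

lemma G_row_submatrix_gram:
  assumes k: "1 \<le> k" "k < n" and R: "R \<subseteq> {0..<n}" and card: "card R = k"
  defines "A \<equiv> submatrix (G_mat n k) R {0..<k} * mat_adjoint (submatrix (G_mat n k) R {0..<k})"
  shows "A \<in> carrier_mat k k"
    and "\<And>a b. a < k \<Longrightarrow> b < k \<Longrightarrow>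
           A $$ (a,b) = of_real (1 / real k) * support_char_sum n k (pick R a) (pick R b)"
    and "hermitian_mat A"
    and "\<And>a. a < k \<Longrightarrow> A $$ (a,a) = 1"
proof -
  note gram = submatrix_rows_gram[OF G_mat_carrier[of n k] R, folded A_def, unfolded card]
  show "A \<in> carrier_mat k k" by (rule gram(1))
  have pick_less: "pick R a < n" if "a < k" for a
    using pick_in_set[of a R] R card that by auto
  show index: "A $$ (a,b) = of_real (1 / real k) * support_char_sum n k (pick R a) (pick R b)"
    if "a < k" "b < k" for a b
    using gram(2)[OF that] G_gram_index[OF k pick_less pick_less] that by simp
  show "hermitian_mat A"
    unfolding hermitian_mat_def
  proof (intro allI impI)
    fix i j assume "i < dim_row A" "j < dim_row A"
    then show "A $$ (j,i) = cnj (A $$ (i,j))"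
      using gram(1) by (simp add: index support_char_sum_swap[of n k "pick R j"])
  qed
  show "A $$ (a,a) = 1" if "a < k" for a
    using that k by (simp add: index support_char_sum_diag)
qed

text \<open>If \<open>n\<close> divided all \<open>k(r-s)\<close>, then all of \<open>R\<close> would lie in one residue class modulo
  \<open>n/gcd n k\<close>, which has only \<open>gcd n k\<close> elements below \<open>n\<close>; so \<open>gcd n k = k\<close>.\<close>

lemma ex_pair_not_dvd_mult_diff:
  assumes R: "R \<subseteq> {0..<n}" and card: "card R = k" and k: "k > 0" and not_dvd: "\<not> k dvd n"
  shows "\<exists>r\<in>R. \<exists>s\<in>R. \<not> int n dvd int k * (int r - int s)"
proof (rule ccontr)
  assume "\<not> ?thesis"
  then have all_dvd: "int n dvd int k * (int r - int s)" if "r \<in> R" "s \<in> R" for r s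
    using that by blast
  define g where "g = gcd n k"
  define n' where "n' = n div g"
  have g: "g > 0" unfolding g_def using k by simp
  have n: "n = n' * g" unfolding n'_def g_def by simp
  have k_eq: "k = (k div g) * g" unfolding g_def by simp
  have coprime: "coprime n' (k div g)" unfolding n'_def g_def using k by (intro div_gcd_coprime) simp
  have same_class: "r mod n' = s mod n'" if "r \<in> R" "s \<in> R" for r s
  proof -
    have "int n' * int g dvd int (k div g) * (int r - int s) * int g"
      using all_dvd[OF that] n k_eq by (metis mult.assoc mult.commute of_nat_mult)
    then have "int n' dvd int (k div g) * (int r - int s)" using g by simp
    then have "int n' dvd int r - int s" using coprime
      by (metis coprime_dvd_mult_right_iff coprime_int_iff)
    then show ?thesis by (metis mod_eq_dvd_iff of_nat_eq_iff zmod_int)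
  qed
  have "inj_on (\<lambda>r. r div n') R"
  proof (rule inj_onI)
    fix r s assume rs: "r \<in> R" "s \<in> R" and quotients: "r div n' = s div n'"
    have "r = n' * (r div n') + r mod n'" by simp
    also have "\<dots> = n' * (s div n') + s mod n'" using quotients same_class[OF rs] by simp
    finally show "r = s" by simp
  qed
  moreover have "(\<lambda>r. r div n') ` R \<subseteq> {..<g}"
    using R n by (auto simp: less_mult_imp_div_less mult.commute)
  ultimately have "card R \<le> card {..<g}" by (rule card_inj_on_le) simp
  then have "k \<le> g" using card by simp
  then have "g = k" unfolding g_def using k by (simp add: le_antisym)
  then show False using not_dvd unfolding g_def by (metis gcd_dvd1)
qed

theorem theorem2:
  fixes n k :: nat and R :: "nat set"
  assumes "1 \<le> k" and "k < n"
    and "\<not> (even n \<and> even k)"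
    and "\<forall>M::nat. M > 0 \<longrightarrow> n \<noteq> M * k"
    and "R \<subseteq> {0..<n}" and "card R = k"
  shows "let Gk = submatrix (G_mat n k) R {0..<k};
             A = Gk * mat_adjoint Gk
         in Min {t::real. eigenvalue A (complex_of_real t)} < 1
          \<and> Max {t::real. eigenvalue A (complex_of_real t)} > 1"
proof -
  note k = assms(1,2) and R = assms(5) and card = assms(6)
  define A where "A = submatrix (G_mat n k) R {0..<k} * mat_adjoint (submatrix (G_mat n k) R {0..<k})"
  note A = G_row_submatrix_gram[OF k R card, folded A_def]
  have "\<not> k dvd n"
  proof
    assume "k dvd n"
    then obtain M where "n = M * k" by (metis dvd_def mult.commute)
    moreover have "M > 0" using calculation k by (cases M) auto
    ultimately show False using assms(4) by blast
  qed
  then obtain r s where rs: "r \<in> R" "s \<in> R" and not_dvd: "\<not> int n dvd int k * (int r - int s)"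
    using ex_pair_not_dvd_mult_diff[OF R card] k by auto
  have "finite R" using R finite_subset by blast
  with rs obtain a b where ab: "a < k" "b < k" "pick R a = r" "pick R b = s"
    using ex_pick_index card by metis
  have "a \<noteq> b" and "A $$ (a,b) \<noteq> 0"
    using ab A(2) k not_dvd support_char_sum_nonzero[OF k(2) not_dvd] by auto
  then show ?thesis unfolding Let_def A_def[symmetric]
    by (intro hermitian_unit_diagonal_eigenvalues_straddle_one[OF A(1,3,4) ab(1,2)])
qed

end
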